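(* Let $f:S^{1}\rightarrow Y_{1}$ be any map. Then $f$ is inessential (null-homotopic) in $HA$ if and only if there exists $N$ such that $f$ is inessential in $Y^{N}$.
   Context: For $n\in\{1,2,3,\dots\}$ let $X_{n}\subset\mathbb{R}^{2}$ be the circle of radius $\frac{1}{n}$ centered at $(\frac{1}{n},0)$, and let $Y_{n}=\bigcup_{i=n}^{\infty}X_{i}$ (so $Y_1$ is the Hawaiian earring). Let $A_{n}\subset\mathbb{R}^{2}$ be the closed pinched annulus bounded by $X_{n}\cup X_{n+1}$, and let $Y^{n}=Y_{1}\cup A_{1}\cup\dots\cup A_{n}$ with the subspace topology from $\mathbb{R}^{2}$. The harmonic archipelago $HA$ has underlying set $\bigcup_{n=1}^{\infty}Y^{n}$, with a topology such that each $Y^{n}$ inherits its usual (Euclidean subspace) topology and moreover: (1) there is a sequence $z_{n}\in\operatorname{int}(A_{n})$ such that $\{z_{1},z_{2},\dots\}$ has no subsequential limit in $HA$, and (2) if $p\in HA$ is a subsequential limit of a sequence $y_{1},y_{2},\dots$ with $y_{n}\in\operatorname{int}(A_{n})$ for all $n$, then $p=(0,0)$. Here $Y_1\subset Y^N\subset HA$. *)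

theory Defs
  imports "HOL-Analysis.Analysis"
begin

text \<open>The plane R^2 is modelled by the complex numbers; the point (a,b) is a + b i.\<close>

definition circX :: "nat \<Rightarrow> complex set" where
  "circX n = sphere (complex_of_real (1 / real n)) (1 / real n)"

text \<open>Y_n = union of X_i for i >= n (Y_1 is the Hawaiian earring).\<close>
definition lowY :: "nat \<Rightarrow> complex set" where
  "lowY n = (\<Union>i\<in>{n..}. circX i)"

definition annA :: "nat \<Rightarrow> complex set" where
  "annA n = cball (complex_of_real (1 / real n)) (1 / real n)
            - ball (complex_of_real (1 / real (Suc n))) (1 / real (Suc n))"

definition upY :: "nat \<Rightarrow> complex set" where
  "upY n = lowY 1 \<union> (\<Union>i\<in>{1..n}. annA i)"

definition HA_set :: "complex set" where
  "HA_set = (\<Union>n\<in>{1..}. upY n)"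

definition subseq_limit :: "'a topology \<Rightarrow> (nat \<Rightarrow> 'a) \<Rightarrow> 'a \<Rightarrow> bool" where
  "subseq_limit T y p \<longleftrightarrow> (\<exists>r. strict_mono r \<and> limitin T (y \<circ> r) p sequentially)"

definition HA_topology :: "complex topology \<Rightarrow> bool" where
  "HA_topology T \<longleftrightarrow>
     topspace T = HA_set \<and>
     (\<forall>n\<ge>1. subtopology T (upY n) = top_of_set (upY n)) \<and>
     (\<exists>z. (\<forall>n\<ge>1. z n \<in> interior (annA n)) \<and> \<not> (\<exists>p. subseq_limit T z p)) \<and>
     (\<forall>y p. (\<forall>n\<ge>1. y n \<in> interior (annA n)) \<and> subseq_limit T y p \<longrightarrow> p = 0)"

definition inessential_in :: "complex topology \<Rightarrow> (complex \<Rightarrow> complex) \<Rightarrow> bool" where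
  "inessential_in X f \<longleftrightarrow>
     (\<exists>c. homotopic_with (\<lambda>_. True) (top_of_set (sphere 0 1)) X f (\<lambda>_. c))"

end

theory Submission
  imports Defs
begin

text \<open>
  If \<open>f\<close> is null-homotopic in some \<open>Y\<^sup>N\<close>, it is so in \<open>HA\<close>, since \<open>Y\<^sup>N\<close> carries its Euclidean
  topology as a subspace of \<open>HA\<close>. Conversely, let \<open>H\<close> be a null-homotopy of \<open>f\<close> in \<open>HA\<close>. The two
  conditions on the topology of \<open>HA\<close> force \<open>H\<close> to be continuous into the plane: along a
  subsequence, values of \<open>H\<close> either stay in one annulus or in \<open>Y\<^sub>1\<close>, where the topologies agree,
  or run through the interiors of ever deeper annuli, where the only possible limit is \<open>0\<close>.
  Moreover the compact image of \<open>H\<close> contains only finitely many of the points \<open>z\<^sub>n\<close>, so it misses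
  \<open>z\<^sub>n\<close> for all \<open>n > N\<close>. Each punctured annulus \<open>A\<^sub>n - {z\<^sub>n}\<close> retracts onto its boundary
  \<open>X\<^sub>n \<union> X\<^bsub>n+1\<^esub>\<close>; pasted together, these retract \<open>HA - {z\<^sub>n | n > N}\<close> onto \<open>Y\<^sup>N\<close>,
  continuously at \<open>0\<close> because the annuli shrink to \<open>0\<close>. Composing \<open>H\<close> with this retraction gives a
  null-homotopy of \<open>f\<close> in \<open>Y\<^sup>N\<close>.
\<close>

section \<open>Inversion coordinates\<close>

text \<open>The inversion \<open>z \<mapsto> 2 / z\<close> maps \<open>X\<^sub>n - {0}\<close> onto the line \<open>Re = n\<close>, so circles, annuli and
  the spaces \<open>Y\<^sub>1\<close>, \<open>Y\<^sup>N\<close> become level sets and slabs of \<open>circ_coord\<close> (together with \<open>0\<close>).\<close>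

definition circ_coord :: "complex \<Rightarrow> real" where
  "circ_coord z = Re (2 / z)"

lemma circ_coord_0 [simp]: "circ_coord 0 = 0"
  by (simp add: circ_coord_def)

lemma circ_coord_nonzero: "z \<noteq> 0 \<Longrightarrow> circ_coord z = 2 * Re z / (cmod z)\<^sup>2"
  by (simp add: circ_coord_def Re_divide cmod_power2)

lemma isCont_circ_coord: "z \<noteq> 0 \<Longrightarrow> isCont circ_coord z"
  unfolding circ_coord_def [abs_def] by (intro continuous_Re continuous_intros) auto

lemma dist_of_real_power2: "(dist (complex_of_real r) z)\<^sup>2 = (cmod z)\<^sup>2 - 2 * r * Re z + r\<^sup>2"
  by (simp add: dist_norm cmod_power2 power2_diff algebra_simps)

lemma mem_cball_of_real_iff:
  assumes "r > 0"
  shows "z \<in> cball (complex_of_real r) r \<longleftrightarrow> z = 0 \<or> 1 / r \<le> circ_coord z"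
proof -
  have "z \<in> cball (complex_of_real r) r \<longleftrightarrow> (dist (complex_of_real r) z)\<^sup>2 \<le> r\<^sup>2"
    using assms by simp
  also have "\<dots> \<longleftrightarrow> (cmod z)\<^sup>2 \<le> 2 * r * Re z"
    by (simp add: dist_of_real_power2)
  also have "\<dots> \<longleftrightarrow> z = 0 \<or> 1 / r \<le> circ_coord z"
    using assms by (cases "z = 0") (auto simp: circ_coord_nonzero field_simps)
  finally show ?thesis .
qed

lemma mem_ball_of_real_iff:
  assumes "r > 0"
  shows "z \<in> ball (complex_of_real r) r \<longleftrightarrow> z \<noteq> 0 \<and> 1 / r < circ_coord z"
proof -
  have "z \<in> ball (complex_of_real r) r \<longleftrightarrow> (dist (complex_of_real r) z)\<^sup>2 < r\<^sup>2"
    using assms by (auto intro: power_strict_mono dest: power2_less_imp_less)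
  also have "\<dots> \<longleftrightarrow> (cmod z)\<^sup>2 < 2 * r * Re z"
    by (simp add: dist_of_real_power2)
  also have "\<dots> \<longleftrightarrow> z \<noteq> 0 \<and> 1 / r < circ_coord z"
    using assms by (cases "z = 0") (auto simp: circ_coord_nonzero field_simps)
  finally show ?thesis .
qed

lemma mem_circX_iff: "n \<ge> 1 \<Longrightarrow> z \<in> circX n \<longleftrightarrow> z = 0 \<or> circ_coord z = n"
  using mem_cball_of_real_iff [of "1 / real n" z] mem_ball_of_real_iff [of "1 / real n" z]
  by (auto simp: circX_def)

lemma mem_annA_iff:
  "n \<ge> 1 \<Longrightarrow> z \<in> annA n \<longleftrightarrow> z = 0 \<or> real n \<le> circ_coord z \<and> circ_coord z \<le> real n + 1"
  using mem_cball_of_real_iff [of "1 / real n" z] mem_ball_of_real_iff [of "1 / real (Suc n)" z]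
  by (auto simp: annA_def)

lemma interior_annA:
  "n \<ge> 1 \<Longrightarrow> interior (annA n) = {z. real n < circ_coord z \<and> circ_coord z < real n + 1}"
  using mem_ball_of_real_iff [of "1 / real n"] mem_cball_of_real_iff [of "1 / real (Suc n)"]
  by (auto simp: annA_def interior_diff)

lemma mem_lowY_iff:
  assumes "n \<ge> 1"
  shows "z \<in> lowY n \<longleftrightarrow> z = 0 \<or> (\<exists>i\<ge>n. circ_coord z = real i)"
proof -
  have "z \<in> lowY n \<longleftrightarrow> (\<exists>i\<ge>n. z \<in> circX i)"
    by (auto simp: lowY_def)
  also have "\<dots> \<longleftrightarrow> (\<exists>i\<ge>n. z = 0 \<or> circ_coord z = real i)"
    using assms by (auto simp: mem_circX_iff)
  also have "\<dots> \<longleftrightarrow> z = 0 \<or> (\<exists>i\<ge>n. circ_coord z = real i)"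
    by auto
  finally show ?thesis .
qed

lemma HA_set_eq: "HA_set = lowY 1 \<union> (\<Union>n\<in>{1..}. annA n)"
  by (auto simp: HA_set_def upY_def)

lemma annA_minus_lowY:
  assumes n: "n \<ge> 1"
  shows "annA n - lowY 1 = interior (annA n)"
proof (intro set_eqI iffI)
  fix z assume z: "z \<in> annA n - lowY 1"
  then have "z \<noteq> 0" "circ_coord z \<noteq> real n" "circ_coord z \<noteq> real (Suc n)"
    using n by (auto simp: mem_lowY_iff)
  then show "z \<in> interior (annA n)"
    using z n by (auto simp: mem_annA_iff interior_annA)
next
  fix z assume z: "z \<in> interior (annA n)"
  have "\<not> (real n < real i \<and> real i < real n + 1)" for i
    by (simp add: Suc_le_eq flip: of_nat_Suc)
  then show "z \<in> annA n - lowY 1"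
    using z n interior_subset [of "annA n"] by (auto simp: interior_annA mem_lowY_iff)
qed

lemma norm_le_if_mem_annA: "z \<in> annA n \<Longrightarrow> cmod z \<le> 2 / n"
proof -
  assume "z \<in> annA n"
  then have "dist (complex_of_real (1 / n)) z \<le> 1 / n"
    by (simp add: annA_def)
  then show ?thesis
    using norm_triangle_sub [of z "complex_of_real (1 / n)"]
    by (simp add: dist_norm norm_minus_commute norm_divide)
qed


lemma circX_subset_lowY: "n \<ge> 1 \<Longrightarrow> circX n \<subseteq> lowY 1"
  by (auto simp: lowY_def)

lemma lowY_subset_upY: "lowY 1 \<subseteq> upY N"
  by (simp add: upY_def)

lemma annA_subset_upY: "1 \<le> n \<Longrightarrow> n \<le> N \<Longrightarrow> annA n \<subseteq> upY N"
  by (auto simp: upY_def)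

lemma upY_mono: "M \<le> N \<Longrightarrow> upY M \<subseteq> upY N"
  by (auto simp: upY_def)

lemma upY_subset_HA_set: "upY N \<subseteq> HA_set"
  using upY_mono [of N "Suc N"] by (force simp: HA_set_def)

lemma circX_Un_subset_annA: "n \<ge> 1 \<Longrightarrow> circX n \<union> circX (Suc n) \<subseteq> annA n"
  by (auto simp: mem_circX_iff mem_annA_iff)

lemma annA_Int_upY_subset:
  assumes "N < n"
  shows "annA n \<inter> upY N \<subseteq> circX n \<union> circX (Suc n)"
proof
  fix z assume z: "z \<in> annA n \<inter> upY N"
  have n: "n \<ge> 1" using assms by simp
  show "z \<in> circX n \<union> circX (Suc n)"
  proof (cases "z \<in> lowY 1")
    case True
    then obtain i where "z = 0 \<or> circ_coord z = real i"
      by (auto simp: mem_lowY_iff)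
    moreover have "z = 0 \<or> real n \<le> circ_coord z \<and> circ_coord z \<le> real n + 1"
      using z n by (simp add: mem_annA_iff)
    ultimately have "z = 0 \<or> circ_coord z = real n \<or> circ_coord z = real (Suc n)"
      by (auto simp: Suc_le_eq simp flip: of_nat_Suc dest: le_antisym)
    then show ?thesis
      using n by (auto simp: mem_circX_iff)
  next
    case False
    then obtain i where i: "1 \<le> i" "i \<le> N" "z \<in> annA i"
      using z by (auto simp: upY_def)
    have "z = 0 \<or> circ_coord z = real n"
      using z i n assms by (auto simp: mem_annA_iff)
    then show ?thesis
      using n by (auto simp: mem_circX_iff)
  qed
qed

lemma interior_annA_disjoint_upY: "N < n \<Longrightarrow> interior (annA n) \<inter> upY N = {}"
  using annA_Int_upY_subset [of N n] interior_subset [of "annA n"]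
  by (fastforce simp: interior_annA mem_circX_iff)

definition annulus_index :: "complex \<Rightarrow> nat" where
  "annulus_index z = nat \<lfloor>circ_coord z\<rfloor>"

lemma annulus_index_eq:
  assumes "n \<ge> 1" "z \<in> interior (annA n)"
  shows "annulus_index z = n"
proof -
  have "\<lfloor>circ_coord z\<rfloor> = int n"
    using assms by (simp add: interior_annA floor_eq_iff)
  then show ?thesis
    by (simp add: annulus_index_def)
qed

lemma mem_interior_annA_annulus_index:
  assumes "z \<in> HA_set - lowY 1"
  shows "annulus_index z \<ge> 1 \<and> z \<in> interior (annA (annulus_index z))"
proof -
  obtain n where "n \<ge> 1" "z \<in> annA n - lowY 1"
    using assms by (auto simp: HA_set_eq)
  then show ?thesis
    using annA_minus_lowY [of n] annulus_index_eq [of n z] by auto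
qed

lemma closed_lowY_1: "closed (lowY 1)"
proof -
  have "continuous_on (- {0}) circ_coord"
    by (simp add: continuous_at_imp_continuous_on isCont_circ_coord)
  then have "closedin (top_of_set (- {0})) (- {0} \<inter> circ_coord -` (of_nat ` {1..}))"
    by (rule continuous_closedin_preimage [OF _ closed_of_nat_image])
  then obtain C where C: "closed C" "- {0} \<inter> circ_coord -` (of_nat ` {1..}) = - {0} \<inter> C"
    by (auto simp: closedin_closed)
  have "w \<in> lowY 1 \<longleftrightarrow> w \<in> C \<union> {0}" for w
  proof (cases "w = 0")
    case False
    then have "w \<in> C \<longleftrightarrow> circ_coord w \<in> of_nat ` {1..}"
      using C(2) by blast
    then show ?thesis
      using False by (auto simp: mem_lowY_iff)
  qed (simp add: mem_lowY_iff)
  then show ?thesis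
    using C(1) by (metis closed_insert insert_is_Un set_eqI sup_commute)
qed

lemma closed_annA: "closed (annA n)"
  unfolding annA_def by (intro closed_Diff closed_cball open_ball)


section \<open>Sequences in the harmonic archipelago\<close>

lemma LIMSEQ_subsubseq:
  fixes x :: "nat \<Rightarrow> 'a::metric_space"
  assumes "\<And>r::nat \<Rightarrow> nat. strict_mono r \<Longrightarrow> \<exists>r'::nat \<Rightarrow> nat. strict_mono r' \<and> (x \<circ> r \<circ> r') \<longlonglongrightarrow> l"
  shows "x \<longlonglongrightarrow> l"
proof (rule ccontr)
  assume "\<not> x \<longlonglongrightarrow> l"
  then obtain e where e: "e > 0" and "\<not> eventually (\<lambda>n. dist (x n) l < e) sequentially"
    unfolding tendsto_iff by auto
  then have "infinite {n. \<not> dist (x n) l < e}"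
    by (simp add: eventually_sequentially infinite_nat_iff_unbounded_le)
  then obtain r :: "nat \<Rightarrow> nat" where r: "strict_mono r" "\<And>n. \<not> dist (x (r n)) l < e"
    using infinite_enumerate by blast
  obtain r' where "strict_mono r'" "(x \<circ> r \<circ> r') \<longlonglongrightarrow> l"
    using assms [OF r(1)] by blast
  then have "eventually (\<lambda>n. dist ((x \<circ> r \<circ> r') n) l < e) sequentially"
    using e unfolding tendsto_iff by blast
  then obtain n where "dist ((x \<circ> r \<circ> r') n) l < e"
    by (auto simp: eventually_sequentially)
  then show False
    using r(2) [of "r' n"] by simp
qed

lemma nat_seq_subseq_const_or_strict_mono:
  fixes lv :: "nat \<Rightarrow> nat"
  obtains r :: "nat \<Rightarrow> nat" and n where "strict_mono r" "\<And>k. lv (r k) = n"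
  | r :: "nat \<Rightarrow> nat" where "strict_mono r" "strict_mono (lv \<circ> r)"
proof (cases "\<exists>n. infinite {k. lv k = n}")
  case True
  then obtain n where "infinite {k. lv k = n}"
    by blast
  then obtain r :: "nat \<Rightarrow> nat" where "strict_mono r" "\<And>k. lv (r k) = n"
    using infinite_enumerate [of "{k. lv k = n}"] by auto
  then show ?thesis
    using that(1) by blast
next
  case False
  have "finite {k. lv k \<le> M}" for M
  proof -
    have "{k. lv k \<le> M} = (\<Union>n\<le>M. {k. lv k = n})"
      by auto
    then show ?thesis
      using False by auto
  qed
  have "\<forall>k. \<exists>k'. k' > k \<and> lv k' > lv k"
  proof
    fix k
    have "finite ({..k} \<union> {k'. lv k' \<le> lv k})"
      using \<open>\<And>M. finite {k. lv k \<le> M}\<close> by blast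
    then obtain k' where "k' \<notin> {..k} \<union> {k'. lv k' \<le> lv k}"
      using ex_new_if_finite [OF infinite_UNIV_nat] by blast
    then have "k' > k \<and> lv k' > lv k"
      by auto
    then show "\<exists>k'. k' > k \<and> lv k' > lv k"
      by blast
  qed
  from choice [OF this] obtain next_k where next_k: "\<And>k. next_k k > k" "\<And>k. lv (next_k k) > lv k"
    by blast
  define r where "r k = (next_k ^^ k) 0" for k
  have "strict_mono r" "strict_mono (lv \<circ> r)"
    unfolding strict_mono_Suc_iff r_def using next_k by simp_all
  then show ?thesis
    using that(2) by blast
qed

lemma continuous_on_if_subseq_tendsto:
  fixes g :: "'a::metric_space \<Rightarrow> 'b::metric_space"
  assumes "\<And>t x. (\<And>k. t k \<in> E) \<Longrightarrow> x \<in> E \<Longrightarrow> t \<longlonglongrightarrow> x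
             \<Longrightarrow> \<exists>r :: nat \<Rightarrow> nat. strict_mono r \<and> (g \<circ> t \<circ> r) \<longlonglongrightarrow> g x"
  shows "continuous_on E g"
  unfolding continuous_on_sequentially
proof (intro allI ballI impI, elim conjE)
  fix s x assume x: "x \<in> E" and s: "\<forall>k. s k \<in> E" and lim: "s \<longlonglongrightarrow> x"
  show "(g \<circ> s) \<longlonglongrightarrow> g x"
  proof (rule LIMSEQ_subsubseq)
    fix \<sigma> :: "nat \<Rightarrow> nat"
    assume "strict_mono \<sigma>"
    then have "(s \<circ> \<sigma>) \<longlonglongrightarrow> x"
      by (rule LIMSEQ_subseq_LIMSEQ [OF lim])
    then show "\<exists>r :: nat \<Rightarrow> nat. strict_mono r \<and> (g \<circ> s \<circ> \<sigma> \<circ> r) \<longlonglongrightarrow> g x"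
      using assms [of "s \<circ> \<sigma>" x] s x by (simp add: comp_assoc)
  qed
qed

lemma HA_seq_subseq_cases:
  fixes s :: "nat \<Rightarrow> complex"
  assumes "\<And>k. s k \<in> HA_set"
  obtains r :: "nat \<Rightarrow> nat" where "strict_mono r" "\<And>k. s (r k) \<in> lowY 1"
  | r :: "nat \<Rightarrow> nat" and n where "strict_mono r" "n \<ge> 1" "\<And>k. s (r k) \<in> annA n"
  | r m :: "nat \<Rightarrow> nat" where "strict_mono r" "strict_mono m" "\<And>k. m k \<ge> 1"
      "\<And>k. s (r k) \<in> interior (annA (m k))"
proof (cases "infinite {k. s k \<in> lowY 1}")
  case True
  then obtain r :: "nat \<Rightarrow> nat" where "strict_mono r" "\<And>k. s (r k) \<in> lowY 1"
    using infinite_enumerate [of "{k. s k \<in> lowY 1}"] by auto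
  then show ?thesis
    using that(1) by blast
next
  case False
  then have "infinite {k. s k \<notin> lowY 1}"
    using Diff_infinite_finite [of "{k. s k \<in> lowY 1}" UNIV] by (simp add: Collect_neg_eq Compl_eq_Diff_UNIV)
  then obtain r0 :: "nat \<Rightarrow> nat" where r0: "strict_mono r0" "\<And>k. s (r0 k) \<notin> lowY 1"
    using infinite_enumerate [of "{k. s k \<notin> lowY 1}"] by auto
  define m0 where "m0 k = annulus_index (s (r0 k))" for k
  have m0: "m0 k \<ge> 1" "s (r0 k) \<in> interior (annA (m0 k))" for k
    using mem_interior_annA_annulus_index [of "s (r0 k)"] assms r0(2) by (auto simp: m0_def)
  show ?thesis
  proof (rule nat_seq_subseq_const_or_strict_mono [of m0])
    fix r :: "nat \<Rightarrow> nat" and n assume "strict_mono r" "\<And>k. m0 (r k) = n"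
    then show ?thesis
      using that(2) [of "r0 \<circ> r" n] m0 r0(1) interior_subset strict_mono_o by fastforce
  next
    fix r :: "nat \<Rightarrow> nat" assume "strict_mono r" "strict_mono (m0 \<circ> r)"
    then show ?thesis
      using that(3) [of "r0 \<circ> r" "m0 \<circ> r"] m0 r0(1) strict_mono_o by fastforce
  qed
qed

lemma LIMSEQ_0_if_mem_annA:
  assumes "strict_mono m" "\<And>k. w k \<in> annA (m k)"
  shows "w \<longlonglongrightarrow> 0"
proof (rule Lim_null_comparison)
  show "\<forall>\<^sub>F k in sequentially. norm (w k) \<le> 2 / real (m k)"
    using assms(2) norm_le_if_mem_annA by (simp add: always_eventually)
  have "filterlim (\<lambda>k. real (m k)) at_top sequentially"
    using filterlim_compose [OF filterlim_real_sequentially filterlim_subseq [OF assms(1)]] by simp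
  then show "(\<lambda>k. 2 / real (m k)) \<longlonglongrightarrow> 0"
    by (intro tendsto_divide_0 [OF tendsto_const] filterlim_at_top_imp_at_infinity)
qed


lemma LIMSEQ_if_limitin_HA_in_upY:
  assumes T: "HA_topology T" and lim: "limitin T s p sequentially" and s: "\<And>k. s k \<in> upY M"
  shows "s \<longlonglongrightarrow> p"
proof -
  have "p \<in> HA_set"
    using limitin_topspace [OF lim] T by (simp add: HA_topology_def)
  then obtain M' where M': "M' \<ge> 1" "p \<in> upY M'"
    by (auto simp: HA_set_def)
  define K where "K = max M M'"
  have "p \<in> upY K" "\<And>k. s k \<in> upY K"
    using M' s upY_mono [of M' K] upY_mono [of M K] by (auto simp: K_def)
  then have "limitin (subtopology T (upY K)) s p sequentially"
    using lim by (simp add: limitin_subtopology)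
  moreover have "subtopology T (upY K) = top_of_set (upY K)"
    using T M' by (simp add: HA_topology_def K_def)
  ultimately show ?thesis
    by (simp add: limitin_subtopology)
qed

text \<open>The second limit condition of \<open>HA_topology\<close> needs a point in every annulus; the annuli
  missed by \<open>m\<close> are filled with the points \<open>z\<^sub>n\<close> of the first one.\<close>

lemma limitin_HA_deep_eq_0:
  assumes T: "HA_topology T" and lim: "limitin T s p sequentially"
    and m: "strict_mono m" and s: "\<And>k. s k \<in> interior (annA (m k))"
  shows "p = 0"
proof -
  obtain z where z: "\<And>n. n \<ge> 1 \<Longrightarrow> z n \<in> interior (annA n)"
    and lim0: "\<And>y p. (\<forall>n\<ge>1. y n \<in> interior (annA n)) \<Longrightarrow> subseq_limit T y p \<Longrightarrow> p = 0"
    using T unfolding HA_topology_def by blast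
  define y where "y n = (if n \<in> range m then s (inv m n) else z n)" for n
  have "inj m"
    using m strict_mono_imp_inj_on by blast
  then have "y \<circ> m = s"
    by (auto simp: y_def fun_eq_iff)
  then have "subseq_limit T y p"
    using lim m by (auto simp: subseq_limit_def)
  moreover have "\<forall>n\<ge>1. y n \<in> interior (annA n)"
    using s z \<open>inj m\<close> by (auto simp: y_def)
  ultimately show ?thesis
    using lim0 by blast
qed

lemma LIMSEQ_if_limitin_HA:
  assumes T: "HA_topology T" and lim: "limitin T x p sequentially" and x: "\<And>k. x k \<in> HA_set"
  shows "x \<longlonglongrightarrow> p"
proof (rule LIMSEQ_subsubseq)
  fix \<sigma> :: "nat \<Rightarrow> nat"
  assume "strict_mono \<sigma>"
  then have lim_\<sigma>: "limitin T (x \<circ> \<sigma> \<circ> r) p sequentially" if "strict_mono r" for r :: "nat \<Rightarrow> nat"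
    using limitin_subsequence [OF strict_mono_o [OF \<open>strict_mono \<sigma>\<close> that] lim] by (simp add: comp_assoc)
  show "\<exists>r :: nat \<Rightarrow> nat. strict_mono r \<and> (x \<circ> \<sigma> \<circ> r) \<longlonglongrightarrow> p"
  proof (rule HA_seq_subseq_cases [of "x \<circ> \<sigma>"])
    fix r :: "nat \<Rightarrow> nat" assume "strict_mono r" "\<And>k. (x \<circ> \<sigma>) (r k) \<in> lowY 1"
    then show ?thesis
      using LIMSEQ_if_limitin_HA_in_upY [OF T lim_\<sigma>, of r 1] lowY_subset_upY by auto
  next
    fix r :: "nat \<Rightarrow> nat" and n assume "strict_mono r" "n \<ge> 1" "\<And>k. (x \<circ> \<sigma>) (r k) \<in> annA n"
    then show ?thesis
      using LIMSEQ_if_limitin_HA_in_upY [OF T lim_\<sigma>, of r n] annA_subset_upY [of n n] by auto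
  next
    fix r m :: "nat \<Rightarrow> nat" assume r: "strict_mono r" and m: "strict_mono m"
      and deep: "\<And>k. (x \<circ> \<sigma>) (r k) \<in> interior (annA (m k))"
    have "p = 0"
      using limitin_HA_deep_eq_0 [OF T lim_\<sigma> [OF r] m] deep by simp
    moreover have "(x \<circ> \<sigma> \<circ> r) k \<in> annA (m k)" for k
      using deep [of k] interior_subset by auto
    then have "(x \<circ> \<sigma> \<circ> r) \<longlonglongrightarrow> 0"
      by (rule LIMSEQ_0_if_mem_annA [OF m])
    ultimately show ?thesis
      using r by blast
  qed (use x in simp)
qed

lemma continuous_on_if_continuous_map_HA:
  fixes D :: "'a::metric_space set"
  assumes T: "HA_topology T" and H: "continuous_map (top_of_set D) T H"
  shows "continuous_on D H"
  unfolding continuous_on_sequentially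
proof (intro allI ballI impI, elim conjE)
  fix s d assume "d \<in> D" "\<forall>k. s k \<in> D" "s \<longlonglongrightarrow> d"
  then have "limitin T (H \<circ> s) (H d) sequentially"
    by (intro continuous_map_limit [OF H]) (simp add: limitin_subtopology)
  moreover have "(H \<circ> s) k \<in> HA_set" for k
    using continuous_map_image_subset_topspace [OF H] T \<open>\<forall>k. s k \<in> D\<close>
    by (auto simp: HA_topology_def)
  ultimately show "(H \<circ> s) \<longlonglongrightarrow> H d"
    using LIMSEQ_if_limitin_HA [OF T] by blast
qed


lemma continuous_on_HA_piecewise:
  assumes E: "E \<subseteq> HA_set"
    and id_lowY: "\<And>w. w \<in> E \<inter> lowY 1 \<Longrightarrow> g w = w"
    and cont: "\<And>n. n \<ge> 1 \<Longrightarrow> continuous_on (E \<inter> annA n) g"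
    and into: "\<And>n w. n \<ge> 1 \<Longrightarrow> w \<in> E \<inter> annA n \<Longrightarrow> g w \<in> annA n"
  shows "continuous_on E g"
proof (rule continuous_on_if_subseq_tendsto)
  fix t x assume t: "\<And>k. t k \<in> E" and x: "x \<in> E" and lim: "t \<longlonglongrightarrow> x"
  have lim_r: "(t \<circ> r) \<longlonglongrightarrow> x" if "strict_mono r" for r :: "nat \<Rightarrow> nat"
    using LIMSEQ_subseq_LIMSEQ [OF lim that] by simp
  show "\<exists>r :: nat \<Rightarrow> nat. strict_mono r \<and> (g \<circ> t \<circ> r) \<longlonglongrightarrow> g x"
  proof (rule HA_seq_subseq_cases [of t])
    fix r :: "nat \<Rightarrow> nat" assume r: "strict_mono r" and low: "\<And>k. t (r k) \<in> lowY 1"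
    have "x \<in> lowY 1"
      by (rule closed_sequentially [OF closed_lowY_1 _ lim_r [OF r]]) (use low in simp)
    then have "g x = x"
      using x id_lowY by blast
    moreover have "g \<circ> t \<circ> r = t \<circ> r"
      using low t id_lowY by (simp add: fun_eq_iff)
    ultimately show ?thesis
      using r lim_r [OF r] by metis
  next
    fix r :: "nat \<Rightarrow> nat" and n
    assume r: "strict_mono r" and n: "n \<ge> 1" and ann: "\<And>k. t (r k) \<in> annA n"
    have "x \<in> annA n"
      by (rule closed_sequentially [OF closed_annA _ lim_r [OF r]]) (use ann in simp)
    then have "(\<lambda>k. g ((t \<circ> r) k)) \<longlonglongrightarrow> g x"
      by (intro continuous_on_tendsto_compose [OF cont [OF n] lim_r [OF r]]) (use x t ann in auto)
    then show ?thesis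
      using r by (auto simp: o_def)
  next
    fix r m :: "nat \<Rightarrow> nat"
    assume r: "strict_mono r" and m: "strict_mono m" and m1: "\<And>k. m k \<ge> 1"
      and deep: "\<And>k. t (r k) \<in> interior (annA (m k))"
    have ann: "(t \<circ> r) k \<in> annA (m k)" for k
      using deep interior_subset by auto
    have "x = 0"
      using LIMSEQ_unique [OF lim_r [OF r] LIMSEQ_0_if_mem_annA [OF m ann]] .
    then have "g x = 0"
      using x id_lowY mem_lowY_iff [of 1 0] by simp
    moreover have "(g \<circ> t \<circ> r) k \<in> annA (m k)" for k
      using into [OF m1] t ann by simp
    then have "(g \<circ> t \<circ> r) \<longlonglongrightarrow> 0"
      by (rule LIMSEQ_0_if_mem_annA [OF m])
    ultimately show ?thesis
      using r by metis
  qed (use E t in auto)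
qed

section \<open>Retracting punctured annuli onto their boundary\<close>

definition annulus_box :: "complex set" where
  "annulus_box = cbox (Complex 0 (-1)) (Complex 1 1)"

lemma mem_annulus_box: "w \<in> annulus_box \<longleftrightarrow> 0 \<le> Re w \<and> Re w \<le> 1 \<and> \<bar>Im w\<bar> \<le> 1"
  by (auto simp: annulus_box_def in_cbox_complex_iff)

lemma interior_annulus_box: "interior annulus_box = {w. 0 < Re w \<and> Re w < 1 \<and> \<bar>Im w\<bar> < 1}"
  by (auto simp: annulus_box_def interior_cbox in_box_complex_iff)

lemma mem_frontier_annulus_box:
  "w \<in> frontier annulus_box \<longleftrightarrow> w \<in> annulus_box \<and> (Re w = 0 \<or> Re w = 1 \<or> \<bar>Im w\<bar> = 1)"
  by (auto simp: annulus_box_def frontier_cbox in_box_complex_iff in_cbox_complex_iff)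

text \<open>On the part \<open>\<bar>Im w\<bar> < 1\<close> of the box, \<open>2 / annulus_chart n w = n + Re w + \<i> Im w / (1 - \<bar>Im w\<bar>)\<close>,
  so the vertical edges go to \<open>X\<^sub>n\<close> and \<open>X\<^bsub>n+1\<^esub>\<close>, while both horizontal edges collapse to \<open>0\<close>.\<close>

definition annulus_chart :: "nat \<Rightarrow> complex \<Rightarrow> complex" where
  "annulus_chart n w = complex_of_real (2 * (1 - \<bar>Im w\<bar>))
     / (complex_of_real ((real n + Re w) * (1 - \<bar>Im w\<bar>)) + \<i> * complex_of_real (Im w))"

definition annulus_chart_inv :: "nat \<Rightarrow> complex \<Rightarrow> complex" where
  "annulus_chart_inv n z = (if z = 0 then \<i>
     else Complex (circ_coord z - real n) (Im (2 / z) / (1 + \<bar>Im (2 / z)\<bar>)))"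

lemma continuous_on_annulus_chart:
  assumes n: "n \<ge> 1"
  shows "continuous_on annulus_box (annulus_chart n)"
proof -
  have "complex_of_real ((real n + Re w) * (1 - \<bar>Im w\<bar>)) + \<i> * complex_of_real (Im w) \<noteq> 0"
    if "w \<in> annulus_box" for w
  proof (cases "\<bar>Im w\<bar> < 1")
    case True
    then have "(real n + Re w) * (1 - \<bar>Im w\<bar>) > 0"
      using n that by (simp add: mem_annulus_box add_pos_nonneg)
    then show ?thesis
      by (auto simp: complex_eq_iff)
  next
    case False
    then show ?thesis
      by (auto simp: complex_eq_iff)
  qed
  then show ?thesis
    unfolding annulus_chart_def by (intro continuous_intros) auto
qed

lemma annulus_chart_edge: "\<bar>Im w\<bar> = 1 \<Longrightarrow> annulus_chart n w = 0"
  by (simp add: annulus_chart_def)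

lemma annulus_chart_strip:
  assumes "n \<ge> 1" "w \<in> annulus_box" "\<bar>Im w\<bar> < 1"
  shows "annulus_chart n w \<noteq> 0 \<and> 2 / annulus_chart n w = Complex (real n + Re w) (Im w / (1 - \<bar>Im w\<bar>))"
proof -
  define a where "a = 1 - \<bar>Im w\<bar>"
  define D where "D = complex_of_real ((real n + Re w) * a) + \<i> * complex_of_real (Im w)"
  have "a > 0" "real n + Re w > 0"
    using assms by (auto simp: a_def mem_annulus_box)
  then have "Re D > 0"
    by (simp add: D_def)
  then have "D \<noteq> 0"
    by auto
  have P: "annulus_chart n w = complex_of_real (2 * a) / D"
    by (simp add: annulus_chart_def D_def a_def)
  have "annulus_chart n w \<noteq> 0" "2 / annulus_chart n w = D / complex_of_real a"
    unfolding P using \<open>D \<noteq> 0\<close> \<open>a > 0\<close> by (simp_all add: field_simps)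
  then show ?thesis
    using \<open>a > 0\<close> by (simp add: D_def a_def complex_eq_iff Re_divide_of_real Im_divide_of_real)
qed

lemma circ_coord_annulus_chart:
  "n \<ge> 1 \<Longrightarrow> w \<in> annulus_box \<Longrightarrow> \<bar>Im w\<bar> < 1 \<Longrightarrow> circ_coord (annulus_chart n w) = real n + Re w"
  using annulus_chart_strip by (simp add: circ_coord_def)

lemma annulus_chart_inv_chart:
  assumes "n \<ge> 1" "w \<in> annulus_box" "\<bar>Im w\<bar> < 1"
  shows "annulus_chart_inv n (annulus_chart n w) = w"
proof -
  define a where "a = 1 - \<bar>Im w\<bar>"
  have "a > 0"
    using assms by (simp add: a_def)
  then have "Im w / a / (1 + \<bar>Im w / a\<bar>) = Im w"
    by (simp add: a_def abs_divide field_simps)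
  moreover have "annulus_chart_inv n (annulus_chart n w) = Complex (Re w) (Im w / a / (1 + \<bar>Im w / a\<bar>))"
    using annulus_chart_strip [OF assms] by (simp add: annulus_chart_inv_def circ_coord_def a_def)
  ultimately show ?thesis
    by (simp add: complex_eq_iff)
qed

lemma annulus_chart_chart_inv:
  assumes n: "n \<ge> 1" and z: "z \<in> annA n"
  shows "annulus_chart_inv n z \<in> annulus_box \<and> annulus_chart n (annulus_chart_inv n z) = z"
proof (cases "z = 0")
  case True
  then show ?thesis
    by (simp add: annulus_chart_inv_def annulus_chart_edge mem_annulus_box)
next
  case False
  define s where "s = Im (2 / z)"
  define q where "q = Complex (circ_coord z - real n) (s / (1 + \<bar>s\<bar>))"
  have q: "annulus_chart_inv n z = q"
    using False by (simp add: annulus_chart_inv_def q_def s_def)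
  have bound: "\<bar>Im q\<bar> < 1"
    by (simp add: q_def abs_divide divide_less_eq add_pos_nonneg)
  have box: "q \<in> annulus_box"
    using z n False bound by (simp add: mem_annulus_box q_def mem_annA_iff)
  have "Im q / (1 - \<bar>Im q\<bar>) = s"
    by (simp add: q_def abs_divide field_simps add_pos_nonneg)
  then have "2 / annulus_chart n q = 2 / z"
    using annulus_chart_strip [OF n box bound] by (simp add: complex_eq_iff circ_coord_def q_def s_def)
  then have "annulus_chart n q = z"
    by (metis divide_cancel_left zero_neq_numeral)
  then show ?thesis
    using box q by simp
qed

lemma annulus_chart_image: "n \<ge> 1 \<Longrightarrow> annulus_chart n ` annulus_box = annA n"
proof (intro equalityI subsetI)
  fix z assume n: "n \<ge> 1" and "z \<in> annulus_chart n ` annulus_box"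
  then obtain w where w: "w \<in> annulus_box" "z = annulus_chart n w"
    by blast
  show "z \<in> annA n"
  proof (cases "\<bar>Im w\<bar> < 1")
    case True
    then show ?thesis
      using n w circ_coord_annulus_chart [OF n w(1) True] by (auto simp: mem_annA_iff mem_annulus_box)
  next
    case False
    then have "z = 0"
      using w annulus_chart_edge [of w n] by (simp add: mem_annulus_box)
    then show ?thesis
      using n by (simp add: mem_annA_iff)
  qed
next
  fix z assume "n \<ge> 1" "z \<in> annA n"
  then show "z \<in> annulus_chart n ` annulus_box"
    using annulus_chart_chart_inv by (metis image_eqI)
qed

lemma annulus_chart_frontier:
  assumes n: "n \<ge> 1" and w: "w \<in> frontier annulus_box"
  shows "annulus_chart n w \<in> circX n \<union> circX (Suc n)"
proof (cases "\<bar>Im w\<bar> < 1")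
  case True
  then show ?thesis
    using w n circ_coord_annulus_chart [OF n _ True] by (auto simp: mem_frontier_annulus_box mem_circX_iff)
next
  case False
  then have "annulus_chart n w = 0"
    using w annulus_chart_edge [of w n] by (simp add: mem_frontier_annulus_box mem_annulus_box)
  then show ?thesis
    using n by (simp add: mem_circX_iff)
qed

lemma annulus_chart_inv_boundary:
  assumes n: "n \<ge> 1" and z: "z \<in> circX n \<union> circX (Suc n)"
  shows "annulus_chart_inv n z \<in> frontier annulus_box"
  using annulus_chart_chart_inv [OF n, of z] circX_Un_subset_annA [OF n] z n
  by (auto simp: mem_frontier_annulus_box mem_circX_iff annulus_chart_inv_def)

lemma frontier_annulus_box_retract_of_punctured:
  assumes p: "p \<in> interior annulus_box"
  shows "frontier annulus_box retract_of (annulus_box - {p})"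
proof -
  have "interior annulus_box \<noteq> {}"
    using p by blast
  then have "rel_frontier annulus_box = frontier annulus_box" "p \<in> rel_interior annulus_box"
    using p by (simp_all add: rel_frontier_nonempty_interior rel_interior_nonempty_interior)
  moreover have "frontier annulus_box \<subseteq> annulus_box"
    by (auto simp: mem_frontier_annulus_box)
  ultimately obtain r where "retraction (annulus_box - {p}) (frontier annulus_box) r"
    using rel_frontier_deformation_retract_of_punctured_convex [of annulus_box annulus_box p]
      hull_subset [of annulus_box]
    by (metis annulus_box_def bounded_cbox convex_box(1))
  then show ?thesis
    unfolding retract_of_def by blast
qed

lemma annulus_chart_inv_interior:
  assumes n: "n \<ge> 1" and z: "z \<in> interior (annA n)"
  shows "annulus_chart_inv n z \<in> interior annulus_box"
proof -
  have "z \<noteq> 0"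
    using z n by (auto simp: interior_annA)
  then show ?thesis
    using z n by (simp add: annulus_chart_inv_def interior_annA interior_annulus_box
        abs_divide divide_less_eq add_pos_nonneg)
qed

lemma annulus_chart_eq_iff:
  assumes n: "n \<ge> 1" and z: "z \<in> interior (annA n)" and w: "w \<in> annulus_box"
  shows "annulus_chart n w = z \<longleftrightarrow> w = annulus_chart_inv n z"
proof
  assume P: "annulus_chart n w = z"
  have "z \<noteq> 0"
    using z n by (auto simp: interior_annA)
  then have "\<bar>Im w\<bar> < 1"
    using P w annulus_chart_edge [of w n] by (force simp: mem_annulus_box)
  then show "w = annulus_chart_inv n z"
    using annulus_chart_inv_chart [OF n w] P by simp
next
  assume "w = annulus_chart_inv n z"
  then show "annulus_chart n w = z"
    using annulus_chart_chart_inv [OF n] z interior_subset by blast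
qed

text \<open>Since \<open>annulus_chart n\<close> is a quotient map, a map on the punctured annulus is continuous as
  soon as its composite with the chart is.\<close>

lemma quotient_map_annulus_chart_punctured:
  assumes n: "n \<ge> 1" and z: "z \<in> interior (annA n)"
  shows "quotient_map (top_of_set (annulus_box - {annulus_chart_inv n z})) (top_of_set (annA n - {z}))
           (annulus_chart n)"
proof -
  let ?K = annulus_box and ?p = "annulus_chart_inv n z"
  have "quotient_map (top_of_set ?K) (top_of_set (annA n)) (annulus_chart n)"
    using continuous_on_annulus_chart [OF n] annulus_chart_image [OF n]
    by (intro continuous_imp_quotient_map)
      (auto simp: annulus_box_def compact_space_subtopology Hausdorff_space_subtopology)
  moreover have "{w \<in> topspace (top_of_set ?K). annulus_chart n w \<in> annA n - {z}} = ?K - {?p}"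
  proof -
    have "annulus_chart n w \<in> annA n - {z} \<longleftrightarrow> w \<noteq> ?p" if "w \<in> ?K" for w
    proof -
      have "annulus_chart n w \<in> annA n"
        using annulus_chart_image [OF n] that by blast
      then show ?thesis
        using annulus_chart_eq_iff [OF n z that] by simp
    qed
    then show ?thesis
      by auto
  qed
  moreover have "openin (top_of_set (annA n)) (annA n - {z})"
    by (simp add: openin_delete)
  ultimately have "quotient_map (subtopology (top_of_set ?K) (?K - {?p}))
      (subtopology (top_of_set (annA n)) (annA n - {z})) (annulus_chart n)"
    by (blast intro: quotient_map_restriction)
  then show ?thesis
    by (simp add: subtopology_subtopology Int_absorb1 Diff_subset)
qed

lemma continuous_on_annulus_chart_conj:
  assumes n: "n \<ge> 1" and z: "z \<in> interior (annA n)"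
    and r: "retraction (annulus_box - {annulus_chart_inv n z}) (frontier annulus_box) r"
  shows "continuous_on (annA n - {z}) (annulus_chart n \<circ> r \<circ> annulus_chart_inv n)"
proof -
  let ?K = annulus_box and ?P = "annulus_chart n" and ?Q = "annulus_chart_inv n"
  let ?p = "?Q z"
  have r_frontier: "r w \<in> frontier ?K" if "w \<in> ?K - {?p}" for w
    using r that by (auto simp: retraction_def)
  have PQ: "?P (r (?Q (?P w))) = ?P (r w)" if "w \<in> ?K - {?p}" for w
  proof (cases "\<bar>Im w\<bar> < 1")
    case True
    then show ?thesis
      using annulus_chart_inv_chart [OF n _ True] that by simp
  next
    case False
    then have edge: "\<bar>Im w\<bar> = 1" and "w \<in> frontier ?K" "\<i> \<in> frontier ?K"
      using that by (auto simp: mem_frontier_annulus_box mem_annulus_box)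
    then have "r w = w" "r \<i> = \<i>"
      using r unfolding retraction_def by blast+
    moreover have "?Q (?P w) = \<i>"
      using edge by (simp add: annulus_chart_edge annulus_chart_inv_def)
    ultimately show ?thesis
      using edge by (simp add: annulus_chart_edge)
  qed
  have "continuous_on (?K - {?p}) r"
    using r by (simp add: retraction_def)
  moreover have "continuous_on (r ` (?K - {?p})) ?P"
    by (rule continuous_on_subset [OF continuous_on_annulus_chart [OF n]])
      (use r_frontier in \<open>auto simp: mem_frontier_annulus_box\<close>)
  ultimately have "continuous_on (?K - {?p}) ((?P \<circ> r \<circ> ?Q) \<circ> ?P)"
    by (rule continuous_on_eq [OF continuous_on_compose]) (simp add: PQ)
  then have "continuous_map (top_of_set (annA n - {z})) euclidean (?P \<circ> r \<circ> ?Q)"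
    by (intro continuous_compose_quotient_map [OF quotient_map_annulus_chart_punctured [OF n z]]) simp
  then show ?thesis
    by simp
qed

lemma circX_Un_retract_of_punctured_annA:
  assumes n: "n \<ge> 1" and z: "z \<in> interior (annA n)"
  shows "(circX n \<union> circX (Suc n)) retract_of (annA n - {z})"
proof -
  let ?K = annulus_box and ?P = "annulus_chart n" and ?Q = "annulus_chart_inv n"
  obtain r where r: "retraction (?K - {?Q z}) (frontier ?K) r"
    using frontier_annulus_box_retract_of_punctured annulus_chart_inv_interior [OF n z]
    unfolding retract_of_def by blast
  define g where "g = ?P \<circ> r \<circ> ?Q"
  have "continuous_on (annA n - {z}) g"
    unfolding g_def by (rule continuous_on_annulus_chart_conj [OF n z r])
  moreover have "g y \<in> circX n \<union> circX (Suc n)" if "y \<in> annA n - {z}" for y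
  proof -
    have "?Q y \<in> ?K - {?Q z}"
      using annulus_chart_chart_inv [OF n, of y] annulus_chart_eq_iff [OF n z] that by auto
    then show ?thesis
      using annulus_chart_frontier [OF n] r by (auto simp: g_def retraction_def)
  qed
  moreover have "g y = y" if "y \<in> circX n \<union> circX (Suc n)" for y
    using r annulus_chart_inv_boundary [OF n that] annulus_chart_chart_inv [OF n, of y]
      circX_Un_subset_annA [OF n] that
    by (auto simp: g_def retraction_def)
  moreover have "circX n \<union> circX (Suc n) \<subseteq> annA n - {z}"
    using circX_Un_subset_annA [OF n] z n by (auto simp: interior_annA mem_circX_iff)
  ultimately show ?thesis
    unfolding retract_of_def retraction_def by blast
qed

section \<open>Retracting the archipelago onto \<open>Y\<^sup>N\<close>\<close>

definition HA_retraction :: "nat \<Rightarrow> (nat \<Rightarrow> complex \<Rightarrow> complex) \<Rightarrow> complex \<Rightarrow> complex" where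
  "HA_retraction N \<rho> w = (if w \<in> upY N then w else \<rho> (annulus_index w) w)"

lemma HA_retraction_annA:
  assumes "N < n" "w \<in> annA n" and \<rho>: "retraction (annA n - {z}) (circX n \<union> circX (Suc n)) (\<rho> n)"
  shows "HA_retraction N \<rho> w = \<rho> n w"
proof (cases "w \<in> upY N")
  case True
  then have "w \<in> circX n \<union> circX (Suc n)"
    using annA_Int_upY_subset [OF \<open>N < n\<close>] \<open>w \<in> annA n\<close> by blast
  then show ?thesis
    using True \<rho> by (simp add: HA_retraction_def retraction_def)
next
  case False
  then have "w \<in> interior (annA n)"
    using assms annA_minus_lowY [of n] lowY_subset_upY [of N] by auto
  then show ?thesis
    using False \<open>N < n\<close> annulus_index_eq [of n w] by (simp add: HA_retraction_def)
qed

lemma HA_retraction_mem_circX: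
  assumes "N < n" "w \<in> annA n - {z}" and \<rho>: "retraction (annA n - {z}) (circX n \<union> circX (Suc n)) (\<rho> n)"
  shows "HA_retraction N \<rho> w \<in> circX n \<union> circX (Suc n)"
  using HA_retraction_annA [where \<rho> = \<rho>, OF assms(1) _ \<rho>] assms(2) \<rho> by (auto simp: retraction_def)

lemma continuous_on_HA_retraction:
  assumes \<rho>: "\<And>n. n > N \<Longrightarrow> retraction (annA n - {z n}) (circX n \<union> circX (Suc n)) (\<rho> n)"
  shows "continuous_on (HA_set - z ` {N<..}) (HA_retraction N \<rho>)"
proof (rule continuous_on_HA_piecewise)
  fix n :: nat assume n: "n \<ge> 1"
  let ?E = "HA_set - z ` {N<..}"
  show "continuous_on (?E \<inter> annA n) (HA_retraction N \<rho>)"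
  proof (cases "n \<le> N")
    case True
    show ?thesis
      by (rule continuous_on_eq [OF continuous_on_id])
        (use annA_subset_upY [OF n True] in \<open>auto simp: HA_retraction_def\<close>)
  next
    case False
    have "continuous_on (annA n - {z n}) (\<rho> n)"
      using \<rho> [of n] False by (simp add: retraction_def)
    then have "continuous_on (?E \<inter> annA n) (\<rho> n)"
      by (rule continuous_on_subset) (use False in auto)
    then show ?thesis
      by (rule continuous_on_eq)
        (use HA_retraction_annA [where \<rho> = \<rho>, OF _ _ \<rho> [of n]] False in \<open>auto simp: not_le\<close>)
  qed
  show "HA_retraction N \<rho> w \<in> annA n" if "w \<in> ?E \<inter> annA n" for w
  proof (cases "n \<le> N")
    case False
    then have "w \<in> annA n - {z n}"
      using that by (auto simp: not_le image_iff)
    then have "HA_retraction N \<rho> w \<in> circX n \<union> circX (Suc n)"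
      using HA_retraction_mem_circX [where \<rho> = \<rho>, OF _ _ \<rho> [of n]] False by (simp add: not_le)
    then show ?thesis
      using circX_Un_subset_annA [OF n] by blast
  qed (use that annA_subset_upY [OF n] in \<open>auto simp: HA_retraction_def\<close>)
qed (use lowY_subset_upY in \<open>auto simp: HA_retraction_def\<close>)

lemma HA_retraction_mem_upY:
  assumes \<rho>: "\<And>n. n > N \<Longrightarrow> retraction (annA n - {z n}) (circX n \<union> circX (Suc n)) (\<rho> n)"
    and w: "w \<in> HA_set - z ` {N<..}"
  shows "HA_retraction N \<rho> w \<in> upY N"
proof (cases "w \<in> upY N")
  case False
  define n where "n = annulus_index w"
  have "n \<ge> 1" "w \<in> interior (annA n)"
    using mem_interior_annA_annulus_index [of w] w False lowY_subset_upY [of N] by (auto simp: n_def)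
  moreover have "n > N"
    using annA_subset_upY [of n N] interior_subset [of "annA n"] False calculation by force
  ultimately have "HA_retraction N \<rho> w \<in> circX n \<union> circX (Suc n)"
    using HA_retraction_mem_circX [where \<rho> = \<rho>, OF _ _ \<rho>] w interior_subset by blast
  then show ?thesis
    using circX_subset_lowY [of n] circX_subset_lowY [of "Suc n"] \<open>n \<ge> 1\<close> lowY_subset_upY by auto
qed (simp add: HA_retraction_def)

lemma upY_retract_of_HA_minus:
  assumes z: "\<And>n. n > N \<Longrightarrow> z n \<in> interior (annA n)"
  shows "upY N retract_of (HA_set - z ` {N<..})"
proof -
  have "\<forall>n. \<exists>\<rho>. n > N \<longrightarrow> retraction (annA n - {z n}) (circX n \<union> circX (Suc n)) \<rho>"
    using circX_Un_retract_of_punctured_annA z unfolding retract_of_def by simp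
  from choice [OF this] obtain \<rho>
    where \<rho>: "\<And>n. n > N \<Longrightarrow> retraction (annA n - {z n}) (circX n \<union> circX (Suc n)) (\<rho> n)"
    by blast
  have "z n \<notin> upY N" if "n > N" for n
    using interior_annA_disjoint_upY [OF that] z [OF that] by blast
  then have "upY N \<subseteq> HA_set - z ` {N<..}"
    using upY_subset_HA_set by auto
  moreover have "continuous_on (HA_set - z ` {N<..}) (HA_retraction N \<rho>)"
    using \<rho> by (rule continuous_on_HA_retraction)
  moreover have "HA_retraction N \<rho> w \<in> upY N" if "w \<in> HA_set - z ` {N<..}" for w
    using \<rho> that by (rule HA_retraction_mem_upY)
  moreover have "HA_retraction N \<rho> w = w" if "w \<in> upY N" for w
    using that by (simp add: HA_retraction_def)
  ultimately show ?thesis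
    unfolding retract_of_def retraction_def by blast
qed

section \<open>Null-homotopies in the harmonic archipelago\<close>

lemma finite_visits_compact_image:
  fixes D :: "'a::metric_space set"
  assumes H: "continuous_map (top_of_set D) T H" and D: "compact D"
    and no_lim: "\<not> (\<exists>p. subseq_limit T z p)"
  shows "finite {n. z n \<in> H ` D}"
proof (rule ccontr)
  assume "infinite {n. z n \<in> H ` D}"
  then obtain m :: "nat \<Rightarrow> nat" where m: "strict_mono m" "\<And>k. z (m k) \<in> H ` D"
    using infinite_enumerate [of "{n. z n \<in> H ` D}"] by auto
  then have "\<forall>k. \<exists>x. x \<in> D \<and> z (m k) = H x"
    by blast
  then obtain d where d: "\<And>k. d k \<in> D" "\<And>k. z (m k) = H (d k)"
    by metis
  obtain l \<tau> where l: "l \<in> D" "strict_mono \<tau>" "(d \<circ> \<tau>) \<longlonglongrightarrow> l"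
    using compact_imp_seq_compact [OF D] d(1) unfolding seq_compact_def by metis
  have "limitin T (H \<circ> (d \<circ> \<tau>)) (H l) sequentially"
    using l d(1) by (intro continuous_map_limit [OF H]) (simp add: limitin_subtopology)
  moreover have "H \<circ> (d \<circ> \<tau>) = z \<circ> (m \<circ> \<tau>)"
    using d(2) by (auto simp: fun_eq_iff)
  ultimately have "subseq_limit T z (H l)"
    using strict_mono_o [OF m(1) l(2)] by (auto simp: subseq_limit_def)
  then show False
    using no_lim by blast
qed


lemma homotopic_with_retraction:
  assumes h: "homotopic_with (\<lambda>_. True) X (top_of_set E) f g" and R: "retraction E S R"
    and f: "f \<in> topspace X \<rightarrow> S" and g: "g \<in> topspace X \<rightarrow> S"
  shows "homotopic_with (\<lambda>_. True) X (top_of_set S) f g"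
proof -
  have "continuous_map (top_of_set E) (top_of_set S) R"
    using R by (auto simp: retraction_def)
  then have "homotopic_with (\<lambda>_. True) X (top_of_set S) (R \<circ> f) (R \<circ> g)"
    by (rule homotopic_with_compose_continuous_map_left [OF h]) simp
  then show ?thesis
    by (rule homotopic_with_eq) (use R f g in \<open>auto simp: retraction_def Pi_iff\<close>)
qed

lemma homotopic_with_HA_imp_punctured:
  fixes S :: "'a::metric_space set" and f g :: "'a \<Rightarrow> complex"
  assumes T: "HA_topology T" and no_lim: "\<not> (\<exists>p. subseq_limit T z p)"
    and h: "homotopic_with (\<lambda>_. True) (top_of_set S) T f g" and S: "compact S"
  obtains N where "homotopic_with (\<lambda>_. True) (top_of_set S) (top_of_set (HA_set - z ` {N<..})) f g"
proof -
  obtain H :: "real \<times> 'a \<Rightarrow> complex"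
    where H: "continuous_map (top_of_set ({0..1} \<times> S)) T H"
    and H0: "\<And>x. H (0, x) = f x" and H1: "\<And>x. H (1, x) = g x"
    using h unfolding homotopic_with_def by auto
  define D where "D = {0..1::real} \<times> S"
  have H_D: "continuous_map (top_of_set D) T H"
    using H by (simp add: D_def)
  have H_HA: "H ` D \<subseteq> HA_set"
    using continuous_map_image_subset_topspace [OF H_D] T by (simp add: HA_topology_def)
  have "finite {n. z n \<in> H ` D}"
    by (rule finite_visits_compact_image [OF H_D _ no_lim]) (simp add: D_def compact_Times S)
  then obtain N where "\<And>n. z n \<in> H ` D \<Longrightarrow> n \<le> N"
    by (auto simp: finite_nat_set_iff_bounded_le)
  then have "H ` D \<subseteq> HA_set - z ` {N<..}"
    using H_HA by force
  then have "continuous_map (top_of_set D) (top_of_set (HA_set - z ` {N<..})) H"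
    using continuous_on_if_continuous_map_HA [OF T H_D]
    by (simp add: image_subset_iff_funcset)
  then have "homotopic_with (\<lambda>_. True) (top_of_set S) (top_of_set (HA_set - z ` {N<..})) f g"
    unfolding homotopic_with_def D_def using H0 H1 by auto
  then show ?thesis
    by (rule that)
qed

lemma inessential_in_HA_if_inessential_in_upY:
  assumes "HA_topology T" "N \<ge> 1" "inessential_in (top_of_set (upY N)) f"
  shows "inessential_in T f"
proof -
  obtain c where h: "homotopic_with (\<lambda>_. True) (top_of_set (sphere 0 1)) (top_of_set (upY N)) f (\<lambda>_. c)"
    using assms(3) by (auto simp: inessential_in_def)
  have "continuous_map (top_of_set (upY N)) T id"
    using assms(1,2) continuous_map_id_subt [of T "upY N"] by (simp add: HA_topology_def)
  from homotopic_with_compose_continuous_map_left [OF h this]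
  have "homotopic_with (\<lambda>_. True) (top_of_set (sphere 0 1)) T f (\<lambda>_. c)"
    by (simp add: o_def)
  then show ?thesis
    by (auto simp: inessential_in_def)
qed

lemma inessential_in_upY_if_inessential_in_HA:
  assumes "HA_topology T" and "continuous_map (top_of_set (sphere 0 1)) (top_of_set (lowY 1)) f"
    and "inessential_in T f"
  shows "\<exists>N\<ge>1. inessential_in (top_of_set (upY N)) f"
proof -
  obtain c where h: "homotopic_with (\<lambda>_. True) (top_of_set (sphere 0 1)) T f (\<lambda>_. c)"
    using assms(3) by (auto simp: inessential_in_def)
  obtain z where z: "\<And>n. n \<ge> 1 \<Longrightarrow> z n \<in> interior (annA n)" and no_lim: "\<not> (\<exists>p. subseq_limit T z p)"
    using assms(1) unfolding HA_topology_def by blast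
  obtain N0 where h0: "homotopic_with (\<lambda>_. True) (top_of_set (sphere 0 1)) (top_of_set (HA_set - z ` {N0<..}))
      f (\<lambda>_. c)"
    using homotopic_with_HA_imp_punctured [OF assms(1) no_lim h compact_sphere] by blast
  have "continuous_map (top_of_set (sphere (0::complex) 1)) (top_of_set (HA_set - z ` {N0<..})) (\<lambda>_. c)"
    using homotopic_with_imp_continuous_maps [OF h0] by blast
  then have "c \<in> HA_set"
    unfolding continuous_map_const by (auto simp: subtopology_trivial_iff)
  then obtain Mc where "Mc \<ge> 1" "c \<in> upY Mc"
    by (auto simp: HA_set_def)
  define N where "N = max N0 Mc"
  have N: "N \<ge> 1" "c \<in> upY N"
    using \<open>Mc \<ge> 1\<close> \<open>c \<in> upY Mc\<close> upY_mono [of Mc N] by (auto simp: N_def)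
  have "homotopic_with (\<lambda>_. True) (top_of_set (sphere 0 1)) (top_of_set (HA_set - z ` {N<..})) f (\<lambda>_. c)"
    using h0 by (rule homotopic_with_subset_right) (auto simp: N_def)
  moreover obtain R where "retraction (HA_set - z ` {N<..}) (upY N) R"
    using upY_retract_of_HA_minus [of N z] z N unfolding retract_of_def by force
  moreover have "f \<in> topspace (top_of_set (sphere 0 1)) \<rightarrow> upY N"
    using assms(2) lowY_subset_upY [of N] by (auto simp: continuous_map_in_subtopology)
  ultimately have "homotopic_with (\<lambda>_. True) (top_of_set (sphere 0 1)) (top_of_set (upY N)) f (\<lambda>_. c)"
    by (rule homotopic_with_retraction) (use N(2) in auto)
  then show ?thesis
    using N(1) by (auto simp: inessential_in_def)
qed

theorem lemma4:
  fixes T :: "complex topology" and f :: "complex \<Rightarrow> complex"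
  assumes "HA_topology T"
    and "continuous_map (top_of_set (sphere 0 1)) (top_of_set (lowY 1)) f"
  shows "inessential_in T f \<longleftrightarrow> (\<exists>N\<ge>1. inessential_in (top_of_set (upY N)) f)"
  using inessential_in_upY_if_inessential_in_HA [OF assms] inessential_in_HA_if_inessential_in_upY [OF assms(1)]
  by blast

end
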